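(* Let $n\ge 2$ be an integer, let $\delta\in(0,1)$ with $\delta n$ an integer, and let $\mathcal{D}\subseteq[n]$ be any fixed set with $|\mathcal{D}|=\delta n$. Let $k,\ell\in\mathbb{N}$ with $k\le n$ and $\ell\le n-1$, let $\tilde\gamma\in(0,1)$ and $\beta\in(0,1)$ satisfy $$1-\delta-\tilde\gamma>0 \quad\text{and}\quad 1-\tfrac{\delta n}{n-1}-\beta>0,$$ and set $\tilde c=\tilde\gamma k$ and $t=\beta\ell$. Choose a committee $\mathcal{K}\subseteq[n]$ uniformly at random among all $k$-element subsets of $[n]$, and, given $\mathcal{K}$, for each $j\in\mathcal{K}$ choose $\mathcal{L}_j$ uniformly at random among all $\ell$-element subsets of $[n]\setminus\{j\}$. Consider the events $C_1:\ |\mathcal{K}\setminus\mathcal{D}|=k$; $\quad C_2:\ |\mathcal{K}\setminus\mathcal{D}|>\tilde c$; $\quad C_3:\ \forall j\in\mathcal{K}\cap\mathcal{D},\ |\mathcal{L}_j\setminus\mathcal{D}|\ge t$. If $\eta>0$ and $$k>\frac{\eta+1}{2\log_2(e)\,(1-\delta-\tilde\gamma)^2}\qquad\text{and}\qquad \ell>\frac{\log_2(k)+\eta+1}{2\log_2(e)\,\bigl(1-\frac{\delta n}{n-1}-\beta\bigr)^2},$$ then $$\Pr\bigl[C_1\lor(C_2\land C_3)\bigr]\ \ge\ 1-2^{-\eta}.$$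
   Context: Here $[n]=\{1,\dots,n\}$ is the set of users; $\mathcal{D}$ models the set of users that drop out, $\mathcal{K}$ the committee, and $\mathcal{L}_j$ the backup-neighbor set of committee member $j$. The hypergeometric distribution $\mathcal{HG}(N,C,m)$ is the law of the number of "special" elements in a uniformly random $m$-subset (drawn without replacement) of an $N$-element set containing $C$ special elements; its mean is $mC/N$. All logarithms written $\log_2$ are base 2, and $e$ is Euler's number. *)

theory Defs
  imports "HOL-Probability.Probability"
begin

text \<open>Outside K, L is the empty set (default of Pi_pmf).\<close>

definition committee_exp :: "nat \<Rightarrow> nat \<Rightarrow> nat \<Rightarrow> (nat set \<times> (nat \<Rightarrow> nat set)) pmf" where
  "committee_exp n k l =
     bind_pmf (pmf_of_set {K. K \<subseteq> {1..n} \<and> card K = k}) (\<lambda>K.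
       map_pmf (\<lambda>L. (K, L))
         (Pi_pmf K {} (\<lambda>j. pmf_of_set {L. L \<subseteq> {1..n} - {j} \<and> card L = l})))"

end

theory Submission
  imports Defs
begin

text \<open>Both ways the event can fail are lower tails of hypergeometric counts: the number of
  non-dropped users in the committee, and, for a dropped member \<open>j\<close>, the number of
  non-dropped users in its backup set, drawn from \<open>[n] - {j}\<close> where \<open>\<delta>n - 1\<close> users drop.
  Hoeffding's bound \<open>exp (-2\<epsilon>\<^sup>2m)\<close> holds for sampling \<open>m\<close> elements without replacement:
  expanding \<open>(1 + a)\<^bsup>|S \<inter> D|\<^esup>\<close> over the subsets of \<open>S \<inter> D\<close> and counting the \<open>m\<close>-sets
  containing a given subset bounds the exponential moment by the binomial one, and Markov's
  inequality finishes. A union bound over the at most \<open>k\<close> dropped committee members and the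
  hypotheses on \<open>k\<close> and \<open>l\<close> make each failure probability at most \<open>2\<^bsup>-(\<eta>+1)\<^esup>\<close>.\<close>

lemma real_binomial_le_scaled_power:
  assumes "d \<le> N" "0 < N"
  shows "real (d choose s) \<le> real (N choose s) * (real d / real N) ^ s"
proof (induction s)
  case 0
  then show ?case by simp
next
  case (Suc s)
  define q where "q = real d / real N"
  have q_nonneg: "0 \<le> q" by (simp add: q_def)
  have step: "real (d - s) \<le> real (N - s) * q"
  proof (cases "s \<le> d")
    case True
    have "real s * q \<le> real s" "real N * q = real d"
      using assms by (simp_all add: q_def field_simps mult_right_mono)
    then show ?thesis using True assms by (simp add: of_nat_diff algebra_simps)
  qed (use q_nonneg in simp)
  have choose_Suc: "real (x choose Suc s) * real (Suc s) = real (x choose s) * real (x - s)" for x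
    by (metis binomial_absorb_comp binomial_absorption mult.commute of_nat_mult)
  have "real (d choose Suc s) * real (Suc s) = real (d choose s) * real (d - s)"
    by (rule choose_Suc)
  also have "\<dots> \<le> real (N choose s) * q ^ s * (real (N - s) * q)"
    using Suc.IH step q_nonneg by (intro mult_mono) (auto simp: q_def)
  also have "\<dots> = real (N choose s) * real (N - s) * q ^ Suc s"
    by (simp add: mult_ac)
  also have "real (N choose s) * real (N - s) = real (N choose Suc s) * real (Suc s)"
    by (rule choose_Suc[symmetric])
  finally have "real (d choose Suc s) * real (Suc s) \<le> real (N choose Suc s) * q ^ Suc s * real (Suc s)"
    by (simp only: mult_ac)
  then show ?case
    unfolding q_def by (rule mult_right_le_imp_le) simp
qed

lemma sum_Pow_card:
  assumes "finite A"
  shows "(\<Sum>T\<in>Pow A. f (card T)) = (\<Sum>s\<le>card A. of_nat (card A choose s) * f s)"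
proof -
  have "(\<Sum>T\<in>Pow A. f (card T)) = (\<Sum>s\<le>card A. \<Sum>T\<in>{T\<in>Pow A. card T = s}. f (card T))"
    using assms by (intro sum.group[symmetric]) (auto intro: card_mono)
  also have "\<dots> = (\<Sum>s\<le>card A. of_nat (card A choose s) * f s)"
  proof (intro sum.cong refl)
    fix s
    have "card {T\<in>Pow A. card T = s} = card A choose s"
      using n_subsets[OF assms, of s] by (simp add: Pow_def)
    then show "(\<Sum>T\<in>{T\<in>Pow A. card T = s}. f (card T)) = of_nat (card A choose s) * f s"
      by simp
  qed
  finally show ?thesis .
qed

lemma power_card_eq_sum_Pow:
  fixes a :: "'a :: comm_ring_1"
  assumes "finite A"
  shows "(1 + a) ^ card A = (\<Sum>T\<in>Pow A. a ^ card T)"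
  using sum_Pow_card[OF assms, of "\<lambda>s. a ^ s"] binomial_ring[of a 1 "card A"]
  by (simp add: add.commute mult.commute)

lemma card_supersets_le:
  assumes "finite U" "T \<subseteq> U"
  shows "card {S. S \<subseteq> U \<and> card S = m \<and> T \<subseteq> S}
           \<le> (if card T \<le> m then (card U - card T) choose (m - card T) else 0)"
proof (cases "card T \<le> m")
  case False
  have "{S. S \<subseteq> U \<and> card S = m \<and> T \<subseteq> S} = {}"
    using False assms by (auto dest: card_mono[OF finite_subset])
  then show ?thesis by (simp only: card.empty le0)
next
  case True
  have finite_T: "finite T" using assms finite_subset by blast
  have "{S. S \<subseteq> U \<and> card S = m \<and> T \<subseteq> S}
          \<subseteq> (\<lambda>R. R \<union> T) ` {R. R \<subseteq> U - T \<and> card R = m - card T}"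
  proof
    fix S assume S: "S \<in> {S. S \<subseteq> U \<and> card S = m \<and> T \<subseteq> S}"
    then have "S = (S - T) \<union> T" "card (S - T) = m - card T" "S - T \<subseteq> U - T"
      using finite_T by (auto simp: card_Diff_subset)
    then show "S \<in> (\<lambda>R. R \<union> T) ` {R. R \<subseteq> U - T \<and> card R = m - card T}" by blast
  qed
  then have "card {S. S \<subseteq> U \<and> card S = m \<and> T \<subseteq> S}
               \<le> card ((\<lambda>R. R \<union> T) ` {R. R \<subseteq> U - T \<and> card R = m - card T})"
    using assms by (intro card_mono) auto
  also have "\<dots> \<le> card {R. R \<subseteq> U - T \<and> card R = m - card T}"
    using assms by (intro card_image_le) auto
  also have "\<dots> = (card U - card T) choose (m - card T)"
    using assms finite_T by (simp add: n_subsets card_Diff_subset)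
  finally show ?thesis using True by simp
qed

lemma real_choose_mult_le_scaled_power:
  assumes "s \<le> m" "m \<le> N" "d \<le> N" "0 < N"
  shows "real (d choose s) * real ((N - s) choose (m - s))
           \<le> real (N choose m) * real (m choose s) * (real d / real N) ^ s"
proof -
  have "real (d choose s) * real ((N - s) choose (m - s))
          \<le> real (N choose s) * (real d / real N) ^ s * real ((N - s) choose (m - s))"
    using real_binomial_le_scaled_power[OF assms(3,4)] by (intro mult_right_mono) auto
  also have "\<dots> = real (N choose s) * real ((N - s) choose (m - s)) * (real d / real N) ^ s"
    by (simp only: mult.assoc mult.commute[of "(real d / real N) ^ s"])
  also have "real (N choose s) * real ((N - s) choose (m - s)) = real (N choose m) * real (m choose s)"
    using choose_mult[OF assms(1,2)] by (metis of_nat_mult)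
  finally show ?thesis .
qed

lemma sum_power_card_Int_eq:
  fixes a :: "'a :: comm_ring_1"
  assumes "finite \<S>" "finite D"
  shows "(\<Sum>S\<in>\<S>. (1 + a) ^ card (S \<inter> D)) = (\<Sum>T\<in>Pow D. a ^ card T * of_nat (card {S\<in>\<S>. T \<subseteq> S}))"
proof -
  have "(\<Sum>S\<in>\<S>. (1 + a) ^ card (S \<inter> D)) = (\<Sum>S\<in>\<S>. \<Sum>T | T \<in> Pow D \<and> T \<subseteq> S. a ^ card T)"
  proof (intro sum.cong refl)
    fix S
    have "Pow (S \<inter> D) = {T. T \<in> Pow D \<and> T \<subseteq> S}" by auto
    then show "(1 + a) ^ card (S \<inter> D) = (\<Sum>T | T \<in> Pow D \<and> T \<subseteq> S. a ^ card T)"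
      using assms(2) power_card_eq_sum_Pow[of "S \<inter> D" a] by simp
  qed
  also have "\<dots> = (\<Sum>T\<in>Pow D. \<Sum>S | S \<in> \<S> \<and> T \<subseteq> S. a ^ card T)"
    using assms by (intro sum.swap_restrict) auto
  finally show ?thesis by (simp add: mult.commute)
qed

lemma finite_nonempty_subsets_card:
  assumes "finite U" "m \<le> card U"
  shows "finite {S. S \<subseteq> U \<and> card S = m}" "{S. S \<subseteq> U \<and> card S = m} \<noteq> {}"
proof -
  have "card {S. S \<subseteq> U \<and> card S = m} > 0"
    using n_subsets[OF assms(1)] assms(2) by (simp add: zero_less_binomial_iff)
  then show "finite {S. S \<subseteq> U \<and> card S = m}" "{S. S \<subseteq> U \<and> card S = m} \<noteq> {}"
    by (simp_all add: card_gt_0_iff)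
qed

lemma sum_subsets_power_card_Int_le:
  fixes a :: real
  assumes U: "finite U" and D: "D \<subseteq> U" and "0 < card U" "m \<le> card U" and a: "0 \<le> a"
  shows "(\<Sum>S | S \<subseteq> U \<and> card S = m. (1 + a) ^ card (S \<inter> D))
           \<le> real (card U choose m) * (1 + a * (real (card D) / real (card U))) ^ m"
proof -
  define Ss where "Ss = {S. S \<subseteq> U \<and> card S = m}"
  define N where "N = card U"
  define d where "d = card D"
  define p where "p = real d / real N"
  define g where "g = (\<lambda>s. if s \<le> m then real ((N - s) choose (m - s)) else 0)"
  have finite_Ss: "finite Ss"
    using finite_nonempty_subsets_card[OF U \<open>m \<le> card U\<close>] by (simp add: Ss_def)
  have finite_D: "finite D" using U D finite_subset by blast
  have "d \<le> N" unfolding d_def N_def using D U by (simp add: card_mono)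
  have "(\<Sum>S\<in>Ss. (1 + a) ^ card (S \<inter> D)) = (\<Sum>T\<in>Pow D. a ^ card T * real (card {S\<in>Ss. T \<subseteq> S}))"
    by (rule sum_power_card_Int_eq[OF finite_Ss finite_D])
  also have "\<dots> \<le> (\<Sum>T\<in>Pow D. a ^ card T * g (card T))"
  proof (intro sum_mono mult_left_mono)
    fix T assume "T \<in> Pow D"
    then have "card {S. S \<in> Ss \<and> T \<subseteq> S}
                 \<le> (if card T \<le> m then (card U - card T) choose (m - card T) else 0)"
      using card_supersets_le[OF U, of T m] D unfolding Ss_def by (simp add: conj_assoc)
    then show "real (card {S. S \<in> Ss \<and> T \<subseteq> S}) \<le> g (card T)"
      unfolding g_def N_def by (auto split: if_splits)
  qed (use a in simp)
  also have "\<dots> = (\<Sum>s\<le>d. real (d choose s) * (a ^ s * g s))"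
    unfolding d_def using sum_Pow_card[OF finite_D, of "\<lambda>s. a ^ s * g s"] by simp
  also have "\<dots> = (\<Sum>s\<le>d + m. real (d choose s) * (a ^ s * g s))"
    by (intro sum.mono_neutral_left) auto
  also have "\<dots> \<le> (\<Sum>s\<le>d + m. real (N choose m) * (real (m choose s) * (a * p) ^ s))"
  proof (intro sum_mono)
    fix s
    show "real (d choose s) * (a ^ s * g s) \<le> real (N choose m) * (real (m choose s) * (a * p) ^ s)"
    proof (cases "s \<le> m")
      case True
      have "real (d choose s) * (a ^ s * g s) = a ^ s * (real (d choose s) * real ((N - s) choose (m - s)))"
        using True by (simp add: g_def)
      also have "\<dots> \<le> a ^ s * (real (N choose m) * real (m choose s) * p ^ s)"
        using real_choose_mult_le_scaled_power[OF True] \<open>d \<le> N\<close> assms a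
        by (intro mult_left_mono) (simp_all add: N_def p_def)
      finally show ?thesis by (simp add: power_mult_distrib mult_ac)
    qed (use a in \<open>simp add: g_def p_def\<close>)
  qed
  also have "\<dots> = real (N choose m) * (\<Sum>s\<le>m. real (m choose s) * (a * p) ^ s)"
    by (subst sum_distrib_left[symmetric], intro arg_cong[where f = "\<lambda>x. _ * x"] sum.mono_neutral_right)
      auto
  also have "(\<Sum>s\<le>m. real (m choose s) * (a * p) ^ s) = (1 + a * p) ^ m"
    using binomial_ring[of "a * p" 1 m] by (simp add: add.commute mult.commute)
  finally show ?thesis unfolding Ss_def N_def p_def d_def .
qed

lemma one_plus_mult_exp_minus_one_le:
  fixes h p :: real
  assumes "0 \<le> h" "0 \<le> p"
  shows "1 + p * (exp h - 1) \<le> exp (h * p + h\<^sup>2 / 8)"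
proof -
  have "0 < 1 + p * (exp h - 1)" using assms by (intro add_pos_nonneg) auto
  moreover have "ln (1 + p * (exp h - 1)) \<le> h * p + h\<^sup>2 / 8"
    using Hoeffdings_lemma_aux[OF assms] by simp
  ultimately show ?thesis by (metis exp_le_cancel_iff exp_ln)
qed

lemma card_subsets_few_outside_le:
  fixes \<epsilon> t :: real
  assumes U: "finite U" and D: "D \<subseteq> U" and U_pos: "0 < card U" and m: "m \<le> card U"
    and \<epsilon>: "0 \<le> \<epsilon>" and t: "t \<le> (1 - real (card D) / real (card U) - \<epsilon>) * real m"
  shows "real (card {S. S \<subseteq> U \<and> card S = m \<and> real (card (S - D)) \<le> t})
           \<le> exp (- 2 * \<epsilon>\<^sup>2 * real m) * real (card U choose m)"
proof -
  define p where "p = real (card D) / real (card U)"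
  define h where "h = 4 * \<epsilon>"
  define Ss where "Ss = {S. S \<subseteq> U \<and> card S = m}"
  define B where "B = {S. S \<subseteq> U \<and> card S = m \<and> real (card (S - D)) \<le> t}"
  have "0 \<le> h" "0 \<le> p" using \<epsilon> by (simp_all add: h_def p_def)
  have finite_Ss: "finite Ss"
    using finite_nonempty_subsets_card[OF U m] by (simp add: Ss_def)
  have "B \<subseteq> Ss" unfolding B_def Ss_def by auto
  have exp_le: "exp (h * ((p + \<epsilon>) * real m)) \<le> exp h ^ card (S \<inter> D)" if "S \<in> B" for S
  proof -
    have "finite S" using that U unfolding B_def by (auto intro: finite_subset)
    then have "card (S \<inter> D) + card (S - D) = m"
      using that unfolding B_def by (simp add: card_Int_Diff[symmetric])
    then have "(p + \<epsilon>) * real m \<le> real (card (S \<inter> D))"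
      using that t unfolding B_def p_def by (simp add: algebra_simps)
    then show ?thesis
      using \<open>0 \<le> h\<close> by (simp add: exp_of_nat_mult[symmetric] mult_left_mono mult.commute)
  qed
  \<comment> \<open>Markov's inequality for the exponential moment with parameter \<open>h = 4\<epsilon>\<close>\<close>
  have "real (card B) * exp (h * ((p + \<epsilon>) * real m)) \<le> (\<Sum>S\<in>B. exp h ^ card (S \<inter> D))"
    using sum_mono[OF exp_le] by simp
  also have "\<dots> \<le> (\<Sum>S\<in>Ss. exp h ^ card (S \<inter> D))"
    using finite_Ss \<open>B \<subseteq> Ss\<close> by (intro sum_mono2) auto
  also have "\<dots> \<le> real (card U choose m) * (1 + (exp h - 1) * p) ^ m"
    using sum_subsets_power_card_Int_le[OF U D U_pos m, of "exp h - 1"] \<open>0 \<le> h\<close>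
    unfolding Ss_def p_def by simp
  also have "\<dots> \<le> real (card U choose m) * exp (h * p + h\<^sup>2 / 8) ^ m"
    using one_plus_mult_exp_minus_one_le[OF \<open>0 \<le> h\<close> \<open>0 \<le> p\<close>] \<open>0 \<le> h\<close> \<open>0 \<le> p\<close>
    by (intro mult_left_mono power_mono) (auto simp: mult.commute)
  also have "\<dots> = real (card U choose m) * exp (real m * (h * p + h\<^sup>2 / 8))"
    by (simp add: exp_of_nat_mult)
  finally have "real (card B)
      \<le> real (card U choose m) * exp (real m * (h * p + h\<^sup>2 / 8)) / exp (h * ((p + \<epsilon>) * real m))"
    by (simp add: pos_le_divide_eq)
  also have "\<dots> = real (card U choose m) * exp (real m * (h * p + h\<^sup>2 / 8) - h * ((p + \<epsilon>) * real m))"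
    by (simp add: exp_diff)
  also have "real m * (h * p + h\<^sup>2 / 8) - h * ((p + \<epsilon>) * real m) = - 2 * \<epsilon>\<^sup>2 * real m"
    unfolding h_def by (simp add: power2_eq_square algebra_simps)
  finally show ?thesis unfolding B_def by (simp add: mult.commute)
qed

lemma prob_subsets_few_outside_le:
  fixes \<epsilon> t :: real
  assumes "finite U" "D \<subseteq> U" "0 < card U" "m \<le> card U" "0 \<le> \<epsilon>"
    and "t \<le> (1 - real (card D) / real (card U) - \<epsilon>) * real m"
  shows "measure_pmf.prob (pmf_of_set {S. S \<subseteq> U \<and> card S = m}) {S. real (card (S - D)) \<le> t}
           \<le> exp (- 2 * \<epsilon>\<^sup>2 * real m)"
proof -
  let ?Ss = "{S. S \<subseteq> U \<and> card S = m}"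
  have card_Ss: "card ?Ss = card U choose m"
    using n_subsets[OF assms(1)] by simp
  have "finite ?Ss" "?Ss \<noteq> {}"
    using finite_nonempty_subsets_card[OF assms(1,4)] by simp_all
  moreover have "?Ss \<inter> {S. real (card (S - D)) \<le> t}
      = {S. S \<subseteq> U \<and> card S = m \<and> real (card (S - D)) \<le> t}" by auto
  ultimately show ?thesis
    using card_subsets_few_outside_le[OF assms] card_Ss assms(4)
    by (simp add: measure_pmf_of_set divide_le_eq zero_less_binomial_iff)
qed

lemma measure_bind_pmf_le:
  assumes "\<And>x. x \<in> set_pmf M \<Longrightarrow> measure_pmf.prob (f x) A \<le> c"
  shows "measure_pmf.prob (bind_pmf M f) A \<le> c"
proof -
  obtain x where "x \<in> set_pmf M" using set_pmf_not_empty[of M] by blast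
  then have "0 \<le> c" using assms[of x] measure_nonneg order_trans by blast
  have "emeasure (bind_pmf M f) A = (\<integral>\<^sup>+x. emeasure (f x) A \<partial>M)" by simp
  also have "\<dots> \<le> ennreal c"
    using assms \<open>0 \<le> c\<close>
    by (intro measure_pmf.nn_integral_le_const)
       (auto simp: AE_measure_pmf_iff measure_pmf.emeasure_eq_measure)
  finally show ?thesis
    using \<open>0 \<le> c\<close> by (simp add: measure_pmf.emeasure_eq_measure)
qed

lemma prob_ge_one_minus_of_Compl_subset:
  assumes "- A \<subseteq> B \<union> C"
  shows "measure_pmf.prob M A \<ge> 1 - measure_pmf.prob M B - measure_pmf.prob M C"
proof -
  have "1 - measure_pmf.prob M A = measure_pmf.prob M (- A)"
    using measure_pmf.prob_compl[of A M] by (simp add: Compl_eq_Diff_UNIV)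
  also have "\<dots> \<le> measure_pmf.prob M (B \<union> C)"
    using assms by (intro measure_pmf.finite_measure_mono) auto
  also have "\<dots> \<le> measure_pmf.prob M B + measure_pmf.prob M C"
    by (rule measure_Un_le) auto
  finally show ?thesis by simp
qed

lemma mult_exp_le_two_powr:
  fixes a c x y :: real
  assumes "0 \<le> a" "0 < c" "(log 2 a + y) / (2 * log 2 (exp 1) * c) < x"
  shows "a * exp (- 2 * c * x) \<le> 2 powr (- y)"
proof (cases "a = 0")
  case False
  have "ln (2::real) > 0" by simp
  then have "(log 2 a + y) / (2 * log 2 (exp 1) * c) = (ln a + y * ln 2) / (2 * c)"
    using assms(2) by (simp add: log_def field_simps)
  then have "(ln a + y * ln 2) / (2 * c) < x" using assms(3) by argo
  then have "ln a - 2 * c * x \<le> - y * ln 2"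
    using assms(2) by (simp add: field_simps)
  then have "exp (ln a - 2 * c * x) \<le> exp (- y * ln 2)" by simp
  moreover have "exp (ln a - 2 * c * x) = a * exp (- 2 * c * x)"
    using assms(1) False by (simp add: exp_diff exp_minus divide_inverse)
  ultimately show ?thesis by (simp add: powr_def)
qed simp

lemma map_fst_committee_exp:
  "map_pmf fst (committee_exp n k l) = pmf_of_set {K. K \<subseteq> {1..n} \<and> card K = k}"
  by (simp add: committee_exp_def map_bind_pmf map_pmf_comp bind_return_pmf')

lemma prob_committee_exp_few_outside_le:
  fixes \<epsilon> t :: real
  assumes "D \<subseteq> {1..n}" "0 < n" "k \<le> n" "0 \<le> \<epsilon>"
    and "t \<le> (1 - real (card D) / real n - \<epsilon>) * real k"
  shows "measure_pmf.prob (committee_exp n k l) {(K, L). real (card (K - D)) \<le> t}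
           \<le> exp (- 2 * \<epsilon>\<^sup>2 * real k)"
proof -
  have event: "{(K, L). real (card (K - D)) \<le> t} = fst -` {K. real (card (K - D)) \<le> t}"
    by auto
  have "measure_pmf.prob (committee_exp n k l) {(K, L). real (card (K - D)) \<le> t}
      = measure_pmf.prob (map_pmf fst (committee_exp n k l)) {K. real (card (K - D)) \<le> t}"
    by (simp only: measure_map_pmf event)
  also have "\<dots> \<le> exp (- 2 * \<epsilon>\<^sup>2 * real k)"
    unfolding map_fst_committee_exp
    using prob_subsets_few_outside_le[of "{1..n}" D k \<epsilon> t] assms by simp
  finally show ?thesis .
qed

lemma prob_committee_exp_some_backup_le:
  assumes "k \<le> n" "0 \<le> b"
    and "\<And>j. j \<in> D \<Longrightarrow>
           measure_pmf.prob (pmf_of_set {L. L \<subseteq> {1..n} - {j} \<and> card L = l}) {X. P X} \<le> b"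
  shows "measure_pmf.prob (committee_exp n k l) {(K, L). \<exists>j\<in>K \<inter> D. P (L j)} \<le> real k * b"
  unfolding committee_exp_def
proof (rule measure_bind_pmf_le)
  define Ks where "Ks = {K. K \<subseteq> {1..n} \<and> card K = k}"
  define LS where "LS = (\<lambda>j. pmf_of_set {L. L \<subseteq> {1..n} - {j} \<and> card L = l})"
  have "finite Ks" "Ks \<noteq> {}"
    using finite_nonempty_subsets_card[of "{1..n}" k] \<open>k \<le> n\<close> by (simp_all add: Ks_def)
  fix K assume "K \<in> set_pmf (pmf_of_set Ks)"
  then have K: "K \<subseteq> {1..n}" "card K = k" "finite K"
    using \<open>finite Ks\<close> \<open>Ks \<noteq> {}\<close> by (auto simp: Ks_def finite_subset)
  have event: "(\<lambda>L. (K, L)) -` {(K, L). \<exists>j\<in>K \<inter> D. P (L j)} = (\<Union>j\<in>K \<inter> D. {L. P (L j)})"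
    by auto
  have "measure_pmf.prob (map_pmf (\<lambda>L. (K, L)) (Pi_pmf K {} LS)) {(K, L). \<exists>j\<in>K \<inter> D. P (L j)}
      = measure_pmf.prob (Pi_pmf K {} LS) (\<Union>j\<in>K \<inter> D. {L. P (L j)})"
    by (simp only: measure_map_pmf event)
  also have "\<dots> \<le> (\<Sum>j\<in>K \<inter> D. measure_pmf.prob (Pi_pmf K {} LS) {L. P (L j)})"
    using K by (intro measure_pmf.finite_measure_subadditive_finite) auto
  also have "\<dots> = (\<Sum>j\<in>K \<inter> D. measure_pmf.prob (LS j) {X. P X})"
  proof (intro sum.cong refl)
    fix j assume "j \<in> K \<inter> D"
    then have "map_pmf (\<lambda>f. f j) (Pi_pmf K {} LS) = LS j"
      using Pi_pmf_component[OF \<open>finite K\<close>, of j "{}" LS] by simp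
    then show "measure_pmf.prob (Pi_pmf K {} LS) {L. P (L j)} = measure_pmf.prob (LS j) {X. P X}"
      by (metis measure_map_pmf vimage_Collect_eq)
  qed
  also have "\<dots> \<le> real (card (K \<inter> D)) * b"
    using sum_mono[of "K \<inter> D" _ "\<lambda>_. b"] assms(3) unfolding LS_def by simp
  also have "\<dots> \<le> real k * b"
    using K \<open>0 \<le> b\<close> by (intro mult_right_mono) (auto intro: card_mono)
  finally show "measure_pmf.prob (map_pmf (\<lambda>L. (K, L)) (Pi_pmf K {} LS))
      {(K, L). \<exists>j\<in>K \<inter> D. P (L j)} \<le> real k * b" .
qed

lemma prob_backup_set_few_outside_le:
  fixes \<epsilon> t :: real
  assumes D: "D \<subseteq> {1..n}" "j \<in> D" and "2 \<le> n" "l \<le> n - 1" "0 \<le> \<epsilon>"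
    and t: "t \<le> (1 - (real (card D) - 1) / (real n - 1) - \<epsilon>) * real l"
  shows "measure_pmf.prob (pmf_of_set {L. L \<subseteq> {1..n} - {j} \<and> card L = l})
           {L. real (card (L - D)) \<le> t} \<le> exp (- 2 * \<epsilon>\<^sup>2 * real l)"
proof -
  define U where "U = {1..n} - {j}"
  define Ls where "Ls = {L. L \<subseteq> U \<and> card L = l}"
  have card_U: "card U = n - 1" and "finite U" using D by (auto simp: U_def)
  have "finite D" using D finite_subset by blast
  then have "0 < card D" using D by (auto simp: card_gt_0_iff)
  then have card_D': "real (card (D - {j})) = real (card D) - 1"
    using D \<open>finite D\<close> by (simp add: of_nat_diff)
  have "finite Ls" "Ls \<noteq> {}"
    using finite_nonempty_subsets_card[OF \<open>finite U\<close>] card_U \<open>l \<le> n - 1\<close> by (simp_all add: Ls_def)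
  have "L - (D - {j}) = L - D" if "L \<in> Ls" for L
    using that unfolding Ls_def U_def by auto
  then have "Ls \<inter> {L. real (card (L - D)) \<le> t} = Ls \<inter> {L. real (card (L - (D - {j}))) \<le> t}"
    by auto
  then have "measure_pmf.prob (pmf_of_set Ls) {L. real (card (L - D)) \<le> t}
      = measure_pmf.prob (pmf_of_set Ls) {L. real (card (L - (D - {j}))) \<le> t}"
    using \<open>finite Ls\<close> \<open>Ls \<noteq> {}\<close> by (metis measure_Int_set_pmf set_pmf_of_set inf_commute)
  also have "\<dots> \<le> exp (- 2 * \<epsilon>\<^sup>2 * real l)"
    unfolding Ls_def
  proof (rule prob_subsets_few_outside_le[OF \<open>finite U\<close>])
    show "t \<le> (1 - real (card (D - {j})) / real (card U) - \<epsilon>) * real l"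
      using t \<open>2 \<le> n\<close> by (simp add: card_D' card_U of_nat_diff)
  qed (use assms card_U in \<open>auto simp: U_def\<close>)
  finally show ?thesis unfolding Ls_def U_def .
qed

theorem mainTheorem1:
  fixes n k l :: nat and \<delta> \<gamma> \<beta> \<eta> :: real and D :: "nat set"
  assumes "n \<ge> 2"
    and "0 < \<delta>" "\<delta> < 1"
    and "D \<subseteq> {1..n}" "real (card D) = \<delta> * real n"
    and "k \<le> n" "l \<le> n - 1"
    and "0 < \<gamma>" "\<gamma> < 1" "0 < \<beta>" "\<beta> < 1"
    and "1 - \<delta> - \<gamma> > 0"
    and "1 - \<delta> * real n / (real n - 1) - \<beta> > 0"
    and "\<eta> > 0"
    and "real k > (\<eta> + 1) / (2 * log 2 (exp 1) * (1 - \<delta> - \<gamma>)^2)"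
    and "real l > (log 2 (real k) + \<eta> + 1) /
                  (2 * log 2 (exp 1) * (1 - \<delta> * real n / (real n - 1) - \<beta>)^2)"
  shows "measure_pmf.prob (committee_exp n k l)
           {(K, L). card (K - D) = k \<or>
                    (real (card (K - D)) > \<gamma> * real k \<and>
                     (\<forall>j \<in> K \<inter> D. real (card (L j - D)) \<ge> \<beta> * real l))}
         \<ge> 1 - 2 powr (-\<eta>)"
proof -
  define \<epsilon>\<^sub>1 where "\<epsilon>\<^sub>1 = 1 - \<delta> - \<gamma>"
  define \<epsilon>\<^sub>2 where "\<epsilon>\<^sub>2 = 1 - \<delta> * real n / (real n - 1) - \<beta>"
  define committee_fails where
    "committee_fails = {(K :: nat set, L :: nat \<Rightarrow> nat set). real (card (K - D)) \<le> \<gamma> * real k}"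
  define backup_fails where
    "backup_fails = {(K :: nat set, L). \<exists>j\<in>K \<inter> D. real (card (L j - D)) \<le> \<beta> * real l}"
  have "0 < \<epsilon>\<^sub>1" "0 < \<epsilon>\<^sub>2" using assms(12,13) by (simp_all add: \<epsilon>\<^sub>1_def \<epsilon>\<^sub>2_def)
  let ?M = "committee_exp n k l"
  have "measure_pmf.prob ?M committee_fails \<le> exp (- 2 * \<epsilon>\<^sub>1\<^sup>2 * real k)"
    unfolding committee_fails_def using assms
    by (intro prob_committee_exp_few_outside_le) (auto simp: \<epsilon>\<^sub>1_def)
  also have "\<dots> \<le> 2 powr (- (\<eta> + 1))"
    using assms mult_exp_le_two_powr[of 1 "\<epsilon>\<^sub>1\<^sup>2" "\<eta> + 1" "real k"] by (simp add: \<epsilon>\<^sub>1_def)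
  finally have committee_bound: "measure_pmf.prob ?M committee_fails \<le> 2 powr (- (\<eta> + 1))" .
  have backup_bound: "measure_pmf.prob ?M backup_fails \<le> 2 powr (- (\<eta> + 1))"
  proof -
    have "1 - (real (card D) - 1) / (real n - 1) - \<epsilon>\<^sub>2 = \<beta> + 1 / (real n - 1)"
      using assms(5) by (simp add: \<epsilon>\<^sub>2_def diff_divide_distrib)
    then have "\<beta> * real l \<le> (1 - (real (card D) - 1) / (real n - 1) - \<epsilon>\<^sub>2) * real l"
      using assms(1) by (simp add: distrib_right)
    then have "measure_pmf.prob ?M backup_fails \<le> real k * exp (- 2 * \<epsilon>\<^sub>2\<^sup>2 * real l)"
      unfolding backup_fails_def using assms \<open>0 < \<epsilon>\<^sub>2\<close>
      by (intro prob_committee_exp_some_backup_le prob_backup_set_few_outside_le) auto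
    also have "\<dots> \<le> 2 powr (- (\<eta> + 1))"
      using assms by (intro mult_exp_le_two_powr) (auto simp: \<epsilon>\<^sub>2_def add.assoc)
    finally show ?thesis .
  qed
  have "2 powr (- \<eta>) = 2 * 2 powr (- (\<eta> + 1))"
    using powr_add[of 2 1 "- (\<eta> + 1)"] by simp
  show ?thesis
  proof (rule order_trans[OF _ prob_ge_one_minus_of_Compl_subset[of _ committee_fails backup_fails]])
    show "1 - 2 powr (- \<eta>) \<le> 1 - measure_pmf.prob ?M committee_fails - measure_pmf.prob ?M backup_fails"
      using committee_bound backup_bound \<open>2 powr (- \<eta>) = 2 * 2 powr (- (\<eta> + 1))\<close> by linarith
  qed (auto simp: committee_fails_def backup_fails_def not_le intro: less_imp_le)
qed

end
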